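(* Let $(a,b,c)$ be a primitive Pythagorean triple (positive integers with $a^2+b^2=c^2$, $\gcd(a,b,c)=1$) with $b$ even, and let $r$ be an integer such that: (1) $r>1$ and $r$ is not prime; (2) every prime $p\mid r$ satisfies $p\equiv 1 \pmod 4$; (3) $\gcd(r,a)=\gcd(r,b)=1$. Then the equation \[a^{2}x^{2}+b^{2}y^{2}-c^{2}r^{2}z^{2}=0\] (in variables $x,y,z$) has solutions in $\mathbb R^{+}$ and in $\mathbb Z_{p}^{\times}$ for all primes $p$. Let $\mathcal{P}=\{\text{prime numbers}\}\cup \{1\}$. Then there exists an effective constant $C(a,b,c)$ such that if $x,y\in \mathcal{P}$ and $z\in \mathbb Z$ is a solution of this equation, then $z\le C(a,b,c)/r$. Hence if $r>C(a,b,c)$ the equation has no such solutions, hence no solutions in primes, and so does not satisfy the prime Hasse principle.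
   Context: A solution "in $\mathbb R^+$" (resp. "in $\mathbb Z_p^\times$") means one with all variables in $\{x\in\mathbb R:x>0\}$ (resp. in $\{x\in\mathbb Q_p:|x|_p=1\}$). The prime Hasse principle for a system of homogeneous integer polynomial equations: if it has a solution with all variables in $\mathbb R^+$ and, for each prime $p$, one with all variables in $\mathbb Z_p^\times$, then it has a solution in integers with all variables prime. *)

theory Defs
  imports "HOL-Number_Theory.Number_Theory"
begin

text \<open>A p-adic integer is represented, as in the inverse-limit definition
  Z_p = lim Z/p^k, by a compatible sequence of integer representatives:
  X k is a representative modulo p^k and X (k+1) = X k (mod p^k).
  It is a unit iff p does not divide X 1.  For a polynomial F with integer
  coefficients, F vanishes at the limit point iff F (X k, Y k, Z k) = 0 mod p^k
  for all k.\<close>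

definition padic_int_seq :: "int \<Rightarrow> (nat \<Rightarrow> int) \<Rightarrow> bool" where
  "padic_int_seq p X \<longleftrightarrow> (\<forall>k. [X (Suc k) = X k] (mod p ^ k))"

definition padic_unit_seq :: "int \<Rightarrow> (nat \<Rightarrow> int) \<Rightarrow> bool" where
  "padic_unit_seq p X \<longleftrightarrow> padic_int_seq p X \<and> \<not> p dvd X 1"

definition Zp_unit_solvable :: "int \<Rightarrow> (int \<Rightarrow> int \<Rightarrow> int \<Rightarrow> int) \<Rightarrow> bool" where
  "Zp_unit_solvable p F \<longleftrightarrow>
     (\<exists>X Y Z. padic_unit_seq p X \<and> padic_unit_seq p Y \<and> padic_unit_seq p Z \<and>
        (\<forall>k. p ^ k dvd F (X k) (Y k) (Z k)))"

definition primes_or_one :: "int set" where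
  "primes_or_one = {x. prime x \<or> x = 1}"

end

theory Submission
  imports Defs
begin

text \<open>
  Local solvability: \<open>(r, r, 1)\<close> is a positive real solution and a solution in units at
  every prime \<open>p\<close> not dividing \<open>r\<close>. If \<open>p\<close> divides \<open>r\<close>, then \<open>p \<equiv> 1 (mod 4)\<close>, so
  \<open>j\<^sup>2 \<equiv> -1 (mod p)\<close> for some \<open>j\<close>, and \<open>(b j, a, 1)\<close> solves the equation modulo \<open>p\<close>;
  since \<open>p\<close> does not divide \<open>2 a b\<close>, Hensel's lemma lifts \<open>b j\<close> to a unit of \<open>\<int>\<^sub>p\<close>.

  Obstruction: for \<open>x, y \<in> primes_or_one\<close> put \<open>W = c r |z|\<close>, so \<open>W\<^sup>2 = a\<^sup>2 x\<^sup>2 + b\<^sup>2 y\<^sup>2\<close>.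
  If \<open>x = y\<close> then \<open>x = r |z|\<close>, impossible for composite \<open>r\<close>. Otherwise in
  \<open>(W - b y) (W + b y) = a\<^sup>2 x\<^sup>2\<close> either the prime \<open>x\<close> divides both factors, hence
  divides \<open>2 b\<close> and \<open>W + b y \<le> 4 a\<^sup>2 b\<^sup>2\<close>, or \<open>x\<^sup>2\<close> divides one factor and
  \<open>W - b y \<le> a\<^sup>2\<close>; likewise with the roles of \<open>(a, x)\<close> and \<open>(b, y)\<close> exchanged. Both
  small differences together force \<open>W \<le> 2 c\<^sup>2\<close>, so \<open>r |z| \<le> 4 a\<^sup>2 b\<^sup>2 + 2 c\<^sup>2\<close>
  independently of \<open>r\<close>.
\<close>

lemma primes_or_one_pos: "x \<in> primes_or_one \<Longrightarrow> x > 0"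
  by (auto simp: primes_or_one_def prime_gt_0_int)

lemma primes_or_one_dvdD:
  fixes d y :: int
  assumes y: "y \<in> primes_or_one" and d: "d dvd y" "d > 1"
  shows "d = y"
proof -
  have "y \<noteq> 1"
    using d zdvd_imp_le[of d 1] by auto
  then have "prime y"
    using y by (simp add: primes_or_one_def)
  moreover have "0 \<le> d"
    using d by simp
  ultimately show ?thesis
    using d unfolding prime_int_altdef by fastforce
qed

lemma product_eq_square_of_prime_or_one:
  fixes P S m x :: int
  assumes P: "0 < P" and S: "0 < S" and PS: "P * S = m * x^2" and x: "x \<in> primes_or_one"
  shows "P \<le> m \<or> S \<le> m \<or> (x dvd P \<and> x dvd S)"
proof (cases "x = 1")
  case True
  then show ?thesis
    using P S PS by (simp add: mult_le_cancel_left1)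
next
  case False
  then have "prime x"
    using x by (simp add: primes_or_one_def)
  have coprime_factor_le: "Q \<le> m" if "0 < Q" "0 < R" "Q * R = m * x^2" "\<not> x dvd Q" for Q R
  proof -
    have "coprime (x^2) Q"
      using \<open>prime x\<close> \<open>\<not> x dvd Q\<close> by (simp add: prime_imp_coprime)
    moreover have "x^2 dvd Q * R"
      using \<open>Q * R = m * x^2\<close> by simp
    ultimately obtain k where k: "R = x^2 * k"
      by (auto simp: coprime_dvd_mult_right_iff elim: dvdE)
    then have "x^2 * (Q * k) = x^2 * m"
      using \<open>Q * R = m * x^2\<close> by (simp add: algebra_simps)
    then have "Q * k = m"
      using \<open>prime x\<close> by simp
    moreover have "0 < k"
      using \<open>0 < R\<close> k by (simp add: zero_less_mult_iff)
    ultimately show "Q \<le> m"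
      using mult_left_mono[of 1 k Q] \<open>0 < Q\<close> by simp
  qed
  show ?thesis
    using coprime_factor_le[OF P S PS] coprime_factor_le[OF S P] PS
    by (auto simp: mult.commute)
qed

lemma sum_of_squares_gap_bound:
  fixes a b x y W :: int
  assumes a: "a > 0" and b: "b > 0" and W: "W > 0"
    and x: "x \<in> primes_or_one" and y: "y \<in> primes_or_one" and "x \<noteq> y"
    and eq: "W^2 = a^2 * x^2 + b^2 * y^2"
  shows "W - b * y \<le> a^2 \<or> W + b * y \<le> 4 * a^2 * b^2"
proof -
  define P S where "P = W - b * y" and "S = W + b * y"
  have "x > 0" "y > 0"
    using x y by (simp_all add: primes_or_one_pos)
  have PS: "P * S = a^2 * x^2"
    using eq by (simp add: P_def S_def algebra_simps power2_eq_square)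
  have "0 < S"
    using W b \<open>y > 0\<close> by (simp add: S_def add_pos_pos)
  moreover have "0 < a^2 * x^2"
    using a \<open>x > 0\<close> by simp
  ultimately have "0 < P"
    using PS by (metis zero_less_mult_pos2)
  have "P \<le> S"
    using b \<open>y > 0\<close> by (simp add: P_def S_def)
  have "S \<le> a^2 * x^2"
    using PS \<open>0 < P\<close> \<open>0 < S\<close> mult_right_mono[of 1 P S] by simp
  consider "P \<le> a^2" | "S \<le> a^2" | "x dvd P \<and> x dvd S"
    using product_eq_square_of_prime_or_one[OF \<open>0 < P\<close> \<open>0 < S\<close> PS x] by blast
  then show ?thesis
  proof cases
    case 3
    then have "x dvd (2 * b) * y"
      using dvd_diff[of x S P] by (simp add: P_def S_def mult.assoc)
    have "x dvd 2 * b"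
    proof (cases "x = 1")
      case False
      then have "prime x"
        using x by (simp add: primes_or_one_def)
      moreover have "\<not> x dvd y"
        using primes_or_one_dvdD[OF y] \<open>x \<noteq> y\<close> \<open>prime x\<close> prime_gt_1_int by blast
      ultimately show ?thesis
        using \<open>x dvd (2 * b) * y\<close> prime_dvd_mult_iff by blast
    qed simp
    then have "x \<le> 2 * b"
      using b by (simp add: zdvd_imp_le)
    then have "x^2 \<le> (2 * b)^2"
      using \<open>x > 0\<close> power_mono[of x "2 * b" 2] by simp
    then have "S \<le> 4 * a^2 * b^2"
      using \<open>S \<le> a^2 * x^2\<close> mult_left_mono[of "x^2" "(2 * b)^2" "a^2"]
      by (simp add: power_mult_distrib)
    then show ?thesis
      by (simp add: S_def)
  qed (use \<open>P \<le> S\<close> in \<open>simp_all add: P_def S_def\<close>)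
qed

lemma sum_of_squares_primes_or_one_bound:
  fixes a b x y W :: int
  assumes a: "a > 0" and b: "b > 0" and W: "W \<ge> 0"
    and x: "x \<in> primes_or_one" and y: "y \<in> primes_or_one" and "x \<noteq> y"
    and eq: "W^2 = a^2 * x^2 + b^2 * y^2"
  shows "W \<le> 4 * a^2 * b^2 + 2 * (a^2 + b^2)"
proof -
  have "x > 0" "y > 0"
    using x y by (simp_all add: primes_or_one_pos)
  then have "0 < a^2 * x^2"
    using a by simp
  then have "W^2 > 0"
    using eq by (simp add: add_pos_nonneg)
  with W have "W > 0"
    by (cases "W = 0") simp_all
  have gap_y: "W - b * y \<le> a^2 \<or> W + b * y \<le> 4 * a^2 * b^2"
    by (rule sum_of_squares_gap_bound[OF a b \<open>W > 0\<close> x y \<open>x \<noteq> y\<close> eq])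
  have gap_x: "W - a * x \<le> b^2 \<or> W + a * x \<le> 4 * a^2 * b^2"
    using sum_of_squares_gap_bound[OF b a \<open>W > 0\<close> y x _] \<open>x \<noteq> y\<close> eq by (simp add: ac_simps)
  show ?thesis
  proof (cases "W + b * y \<le> 4 * a^2 * b^2 \<or> W + a * x \<le> 4 * a^2 * b^2")
    case True
    moreover have "0 \<le> b * y" "0 \<le> a * x"
      using a b \<open>x > 0\<close> \<open>y > 0\<close> by simp_all
    ultimately show ?thesis
      by (smt (verit) zero_le_power2)
  next
    case False
    define u v where "u = W - b * y" and "v = W - a * x"
    have "u \<le> a^2" "v \<le> b^2"
      using False gap_x gap_y by (auto simp: u_def v_def)
    \<comment> \<open>With \<open>a x = W - v\<close> and \<open>b y = W - u\<close> the equation becomes \<open>W (2 (u + v) - W) = u^2 + v^2\<close>.\<close>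
    have "W * (2 * (u + v) - W) = u^2 + v^2"
      using eq by (simp add: u_def v_def algebra_simps power2_eq_square)
    then have "0 \<le> W * (2 * (u + v) - W)"
      by simp
    then have "W \<le> 2 * (u + v)"
      using \<open>W > 0\<close> by (simp add: zero_le_mult_iff)
    with \<open>u \<le> a^2\<close> \<open>v \<le> b^2\<close> show ?thesis
      by (smt (verit) zero_le_power2 mult_nonneg_nonneg)
  qed
qed

lemma composite_scaled_solution_bound:
  fixes a b c r x y z :: int
  assumes a: "a > 0" and b: "b > 0" and c: "c > 0" and abc: "a^2 + b^2 = c^2"
    and r: "r > 1" "\<not> prime r"
    and x: "x \<in> primes_or_one" and y: "y \<in> primes_or_one"
    and eq: "a^2 * x^2 + b^2 * y^2 - c^2 * r^2 * z^2 = 0"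
  shows "r * \<bar>z\<bar> \<le> 4 * a^2 * b^2 + 2 * c^2"
proof -
  define W where "W = c * (r * \<bar>z\<bar>)"
  have W_eq: "W^2 = a^2 * x^2 + b^2 * y^2"
    using eq by (simp add: W_def power_mult_distrib)
  have "x \<noteq> y"
  proof
    assume "x = y"
    with W_eq have "(c * (r * \<bar>z\<bar>))^2 = (a^2 + b^2) * x^2"
      by (simp add: W_def algebra_simps)
    then have "(c * (r * \<bar>z\<bar>))^2 = (c * x)^2"
      by (simp add: abc power_mult_distrib)
    then have "r * \<bar>z\<bar> = x"
      using c r primes_or_one_pos[OF x] by (simp add: power2_eq_iff_nonneg)
    then have "r = x"
      using primes_or_one_dvdD[OF x _ \<open>r > 1\<close>] by (metis dvd_triv_left)
    then show False
      using x r by (simp add: primes_or_one_def)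
  qed
  have "W \<le> 4 * a^2 * b^2 + 2 * (a^2 + b^2)"
    using r c by (intro sum_of_squares_primes_or_one_bound[OF a b _ x y \<open>x \<noteq> y\<close> W_eq])
      (simp add: W_def)
  moreover have "r * \<bar>z\<bar> \<le> W"
    using c r mult_right_mono[of 1 c "r * \<bar>z\<bar>"] by (simp add: W_def)
  ultimately show ?thesis
    using abc by simp
qed

lemma composite_scaled_solution_le_div:
  fixes a b c r x y z :: int
  assumes "a > 0" "b > 0" "c > 0" "a^2 + b^2 = c^2" "r > 1" "\<not> prime r"
    and "x \<in> primes_or_one" "y \<in> primes_or_one"
    and "a^2 * x^2 + b^2 * y^2 - c^2 * r^2 * z^2 = 0"
  shows "real_of_int z \<le> real_of_int (4 * a^2 * b^2 + 2 * c^2) / real_of_int r"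
proof -
  have "r * z \<le> 4 * a^2 * b^2 + 2 * c^2"
    using composite_scaled_solution_bound[OF assms] \<open>r > 1\<close>
      mult_left_mono[OF abs_ge_self[of z], of r] by linarith
  then show ?thesis
    using \<open>r > 1\<close> by (simp add: pos_le_divide_eq mult.commute flip: of_int_mult of_int_le_iff)
qed

lemma no_scaled_solution_beyond_bound:
  fixes a b c r x y z :: int
  assumes a: "a > 0" and b: "b > 0" and c: "c > 0" and abc: "a^2 + b^2 = c^2"
    and r: "r > 1" "\<not> prime r" and r_large: "r > 4 * a^2 * b^2 + 2 * c^2"
    and x: "x \<in> primes_or_one" and y: "y \<in> primes_or_one"
  shows "a^2 * x^2 + b^2 * y^2 - c^2 * r^2 * z^2 \<noteq> 0"
proof
  assume eq: "a^2 * x^2 + b^2 * y^2 - c^2 * r^2 * z^2 = 0"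
  have "z = 0"
    using composite_scaled_solution_bound[OF a b c abc r x y eq] r_large r
      mult_left_mono[of 1 "\<bar>z\<bar>" r] by fastforce
  with eq have "a^2 * x^2 + b^2 * y^2 = 0"
    by simp
  moreover have "0 < a^2 * x^2"
    using a primes_or_one_pos[OF x] by simp
  moreover have "0 \<le> b^2 * y^2"
    by simp
  ultimately show False
    by linarith
qed

lemma scaled_pythagorean_real_solution:
  fixes a b c r :: int
  assumes "a^2 + b^2 = c^2" and "r > 0"
  shows "\<exists>x y z :: real. x > 0 \<and> y > 0 \<and> z > 0 \<and>
    (real_of_int a)^2 * x^2 + (real_of_int b)^2 * y^2 - (real_of_int c)^2 * (real_of_int r)^2 * z^2 = 0"
proof (intro exI conjI)
  have "real_of_int ((a^2 + b^2 - c^2) * r^2) = 0"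
    using assms(1) by simp
  then show "(real_of_int a)^2 * (real_of_int r)^2 + (real_of_int b)^2 * (real_of_int r)^2
      - (real_of_int c)^2 * (real_of_int r)^2 * 1^2 = 0"
    by (simp add: algebra_simps)
qed (use assms(2) in simp_all)

lemma prime_1_mod_4_sqrt_minus_one:
  fixes p :: int
  assumes p: "prime p" and p_mod_4: "[p = 1] (mod 4)"
  obtains j where "[j^2 = -1] (mod p)"
proof -
  obtain m where m: "p = 4 * m + 1"
    using p_mod_4 by (metis cong_def cong_iff_dvd_diff dvd_def diff_eq_eq mult.commute)
  have "m \<ge> 1"
    using prime_gt_1_int[OF p] m by simp
  have "prime (nat p)" "2 < nat p"
    using p \<open>m \<ge> 1\<close> m by simp_all
  moreover have "(nat p - 1) div 2 = 2 * nat m"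
    using m \<open>m \<ge> 1\<close> by (simp add: nat_add_distrib nat_mult_distrib)
  ultimately have "[Legendre (-1) p = 1] (mod p)"
    using euler_criterion[of "nat p" "-1"] p by (simp add: prime_ge_0_int)
  moreover have "\<not> [0 = 1] (mod p)" "\<not> [-1 = 1] (mod p)"
    using m \<open>m \<ge> 1\<close> by (auto simp: cong_0_1_int cong_iff_dvd_diff dest: zdvd_imp_le)
  ultimately have "QuadRes p (-1)"
    by (auto simp: Legendre_def split: if_splits)
  then show thesis
    using that by (auto simp: QuadRes_def)
qed

lemma hensel_lift_quadratic:
  fixes p A u X :: int
  assumes p: "prime p" "odd p" and A: "\<not> p dvd A" and X: "\<not> p dvd X"
    and root: "[A * X^2 = u] (mod p ^ Suc k)"
  obtains X' where "[X' = X] (mod p ^ Suc k)" "[A * X'^2 = u] (mod p ^ Suc (Suc k))"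
proof -
  define q where "q = p ^ Suc k"
  obtain m where m: "A * X^2 - u = q * m"
    using root by (auto simp: q_def cong_iff_dvd_diff elim: dvdE)
  have "\<not> p dvd 2"
    using p prime_gt_1_int[of p] zdvd_imp_le[of p 2] by (auto simp: le_less)
  then have "\<not> p dvd 2 * A * X"
    using p A X by (simp add: prime_dvd_mult_iff)
  then have "coprime (2 * A * X) p"
    using prime_imp_coprime[OF p(1)] coprime_commute by blast
  then obtain v where "[2 * A * X * v = 1] (mod p)"
    using cong_solve_coprime_int by blast
  then obtain s where "2 * A * X * v - 1 = p * s"
    by (auto simp: cong_iff_dvd_diff elim: dvdE)
  then have s: "2 * A * X * v = 1 + p * s"
    by simp
  \<comment> \<open>Newton step: \<open>v\<close> inverts the derivative \<open>2 A X\<close> modulo \<open>p\<close>.\<close>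
  define t where "t = - m * v"
  have "A * (X + t * q)^2 - u = (A * X^2 - u) + q * (2 * A * X * t) + q * q * (A * t^2)"
    by (simp add: algebra_simps power2_eq_square)
  also have "\<dots> = q * m - q * m * (2 * A * X * v) + q * q * (A * t^2)"
    by (simp add: m t_def algebra_simps)
  also have "\<dots> = p * q * (A * t^2 * p ^ k - m * s)"
    unfolding s by (simp add: q_def algebra_simps)
  finally have "[A * (X + t * q)^2 = u] (mod p ^ Suc (Suc k))"
    by (simp add: cong_iff_dvd_diff q_def)
  moreover have "[X + t * q = X] (mod p ^ Suc k)"
    by (simp add: q_def cong_iff_dvd_diff)
  ultimately show thesis
    using that by blast
qed

lemma padic_unit_seq_by_lifting:
  fixes p X\<^sub>0 :: int and f :: "int \<Rightarrow> int"
  assumes lift: "\<And>k Y. \<not> p dvd Y \<Longrightarrow> p ^ Suc k dvd f Y \<Longrightarrow>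
      \<exists>Y'. [Y' = Y] (mod p ^ Suc k) \<and> p ^ Suc (Suc k) dvd f Y'"
    and X\<^sub>0: "\<not> p dvd X\<^sub>0" "p dvd f X\<^sub>0"
  obtains X where "padic_unit_seq p X" "\<And>k. p ^ k dvd f (X k)"
proof -
  define next_root where "next_root k Y = (SOME Y'. [Y' = Y] (mod p ^ Suc k) \<and> p ^ Suc (Suc k) dvd f Y')"
    for k Y
  define X where "X = rec_nat X\<^sub>0 next_root"
  have step: "[X (Suc k) = X k] (mod p ^ Suc k)" "p ^ Suc (Suc k) dvd f (X (Suc k))"
    if "\<not> p dvd X k" "p ^ Suc k dvd f (X k)" for k
    using someI_ex[OF lift[OF that]] by (simp_all add: X_def next_root_def)
  have invariant: "\<not> p dvd X k \<and> p ^ Suc k dvd f (X k)" for k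
  proof (induction k)
    case 0
    show ?case
      using X\<^sub>0 by (simp add: X_def)
  next
    case (Suc k)
    then have "[X (Suc k) = X k] (mod p)"
      using step(1) cong_dvd_modulus[of _ _ "p ^ Suc k" p] by simp
    then have "\<not> p dvd X (Suc k)"
      using Suc.IH cong_dvd_iff by blast
    with Suc.IH step(2) show ?case
      by blast
  qed
  have "padic_int_seq p X"
    unfolding padic_int_seq_def
  proof
    fix k
    have "[X (Suc k) = X k] (mod p ^ Suc k)"
      using invariant[of k] step(1) by blast
    then show "[X (Suc k) = X k] (mod p ^ k)"
      by (rule cong_dvd_modulus) (simp add: le_imp_power_dvd)
  qed
  moreover have "\<not> p dvd X 1"
    using invariant by blast
  moreover have "p ^ k dvd f (X k)" for k
    using invariant[of k] dvd_trans[OF le_imp_power_dvd[of k "Suc k" p]] by simp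
  ultimately show thesis
    using that by (simp add: padic_unit_seq_def)
qed

lemma hensel_quadratic_unit_seq:
  fixes p A u X\<^sub>0 :: int
  assumes p: "prime p" "odd p" and A: "\<not> p dvd A" and X\<^sub>0: "\<not> p dvd X\<^sub>0"
    and root: "[A * X\<^sub>0^2 = u] (mod p)"
  obtains X where "padic_unit_seq p X" "\<And>k. p ^ k dvd A * (X k)^2 - u"
proof (rule padic_unit_seq_by_lifting[of p "\<lambda>Y. A * Y^2 - u"])
  show "\<exists>Y'. [Y' = Y] (mod p ^ Suc k) \<and> p ^ Suc (Suc k) dvd A * Y'^2 - u"
    if "\<not> p dvd Y" "p ^ Suc k dvd A * Y^2 - u" for k Y
    using hensel_lift_quadratic[OF p A that(1), of u k] that(2) by (metis cong_iff_dvd_diff)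
qed (use X\<^sub>0 root that in \<open>simp_all add: cong_iff_dvd_diff\<close>)

lemma padic_unit_seq_const: "\<not> p dvd v \<Longrightarrow> padic_unit_seq p (\<lambda>_. v)"
  by (simp add: padic_unit_seq_def padic_int_seq_def)

lemma Zp_unit_solvable_of_int_root:
  assumes "\<not> p dvd x" "\<not> p dvd y" "\<not> p dvd z" "F x y z = 0"
  shows "Zp_unit_solvable p F"
  using assms padic_unit_seq_const unfolding Zp_unit_solvable_def by fastforce

lemma Zp_unit_solvable_scaled_sum_of_squares_dvd:
  fixes a b c r p :: int
  assumes p: "prime p" "[p = 1] (mod 4)" and "p dvd r" and "\<not> p dvd a" "\<not> p dvd b"
  shows "Zp_unit_solvable p (\<lambda>x y z. a^2 * x^2 + b^2 * y^2 - c^2 * r^2 * z^2)"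
proof -
  have "odd p"
    using p cong_dvd_modulus[of p 1 4 2] by (simp add: cong_def odd_iff_mod_2_eq_one)
  obtain j where "[j^2 = -1] (mod p)"
    using prime_1_mod_4_sqrt_minus_one[OF p] by blast
  then have "p dvd j^2 + 1"
    by (simp add: cong_iff_dvd_diff)
  have "\<not> p dvd j"
  proof
    assume "p dvd j"
    then have "p dvd 1"
      using \<open>p dvd j^2 + 1\<close> by (simp add: power2_eq_square dvd_add_right_iff)
    then show False
      using p not_prime_unit by blast
  qed
  define u where "u = c^2 * r^2 - a^2 * b^2"
  have "a^2 * (b * j)^2 - u = a^2 * b^2 * (j^2 + 1) - c^2 * r^2"
    by (simp add: u_def algebra_simps power_mult_distrib)
  moreover have "p dvd a^2 * b^2 * (j^2 + 1)" "p dvd c^2 * r^2"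
    using \<open>p dvd j^2 + 1\<close> \<open>p dvd r\<close> by (simp_all add: power2_eq_square)
  ultimately have "[a^2 * (b * j)^2 = u] (mod p)"
    by (simp add: cong_iff_dvd_diff)
  moreover have "\<not> p dvd a^2" "\<not> p dvd b * j"
    using p \<open>\<not> p dvd a\<close> \<open>\<not> p dvd b\<close> \<open>\<not> p dvd j\<close>
    by (simp_all add: prime_dvd_mult_iff prime_dvd_power_iff)
  ultimately obtain X where X: "padic_unit_seq p X" "\<And>k. p ^ k dvd a^2 * (X k)^2 - u"
    using hensel_quadratic_unit_seq[OF p(1) \<open>odd p\<close>] by blast
  have "p ^ k dvd a^2 * (X k)^2 + b^2 * a^2 - c^2 * r^2 * 1^2" for k
  proof -
    have "a^2 * (X k)^2 + b^2 * a^2 - c^2 * r^2 * 1^2 = a^2 * (X k)^2 - u"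
      by (simp add: u_def algebra_simps)
    then show ?thesis
      using X(2)[of k] by (simp only:)
  qed
  moreover have "padic_unit_seq p (\<lambda>_. a)" "padic_unit_seq p (\<lambda>_. 1)"
    using \<open>\<not> p dvd a\<close> p by (simp_all add: padic_unit_seq_const prime_int_iff)
  ultimately show ?thesis
    unfolding Zp_unit_solvable_def using X(1) by blast
qed

lemma Zp_unit_solvable_scaled_pythagorean:
  fixes a b c r p :: int
  assumes abc: "a^2 + b^2 = c^2" and p: "prime p"
    and r_primes: "\<forall>q. prime q \<and> q dvd r \<longrightarrow> [q = 1] (mod 4)"
    and "coprime r a" "coprime r b"
  shows "Zp_unit_solvable p (\<lambda>x y z. a^2 * x^2 + b^2 * y^2 - c^2 * r^2 * z^2)"
proof (cases "p dvd r")
  case False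
  have "a^2 * r^2 + b^2 * r^2 - c^2 * r^2 * 1^2 = 0"
    using abc by (simp flip: distrib_right)
  then show ?thesis
    using False p by (intro Zp_unit_solvable_of_int_root[of p r r 1]) (simp_all add: prime_int_iff)
next
  case True
  moreover have "\<not> p dvd a" "\<not> p dvd b"
    using True \<open>coprime r a\<close> \<open>coprime r b\<close> p coprime_common_divisor not_prime_unit by blast+
  ultimately show ?thesis
    using r_primes p by (intro Zp_unit_solvable_scaled_sum_of_squares_dvd) auto
qed

theorem theorem6p3:
  fixes a b c :: int
  assumes "a > 0" and "b > 0" and "c > 0"
    and "a\<^sup>2 + b\<^sup>2 = c\<^sup>2"
    and "gcd (gcd a b) c = 1"
    and "even b"
  shows
    "(\<forall>r::int. (r > 1 \<and> \<not> prime r \<and> (\<forall>p. prime p \<and> p dvd r \<longrightarrow> [p = 1] (mod 4))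
                 \<and> gcd r a = 1 \<and> gcd r b = 1) \<longrightarrow>
        (\<exists>x y z :: real. x > 0 \<and> y > 0 \<and> z > 0 \<and>
            (real_of_int a)\<^sup>2 * x\<^sup>2 + (real_of_int b)\<^sup>2 * y\<^sup>2
              - (real_of_int c)\<^sup>2 * (real_of_int r)\<^sup>2 * z\<^sup>2 = 0)
      \<and> (\<forall>p::int. prime p \<longrightarrow>
            Zp_unit_solvable p (\<lambda>x y z. a\<^sup>2 * x\<^sup>2 + b\<^sup>2 * y\<^sup>2 - c\<^sup>2 * r\<^sup>2 * z\<^sup>2)))
   \<and> (\<exists>C::real. \<forall>r::int. (r > 1 \<and> \<not> prime r \<and> (\<forall>p. prime p \<and> p dvd r \<longrightarrow> [p = 1] (mod 4))
                 \<and> gcd r a = 1 \<and> gcd r b = 1) \<longrightarrow>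
        (\<forall>x y z :: int. x \<in> primes_or_one \<and> y \<in> primes_or_one \<and>
            a\<^sup>2 * x\<^sup>2 + b\<^sup>2 * y\<^sup>2 - c\<^sup>2 * r\<^sup>2 * z\<^sup>2 = 0 \<longrightarrow> real_of_int z \<le> C / real_of_int r)
      \<and> (real_of_int r > C \<longrightarrow>
           \<not> (\<exists>x y z :: int. x \<in> primes_or_one \<and> y \<in> primes_or_one \<and>
                 a\<^sup>2 * x\<^sup>2 + b\<^sup>2 * y\<^sup>2 - c\<^sup>2 * r\<^sup>2 * z\<^sup>2 = 0)
         \<and> \<not> (\<exists>x y z :: int. prime x \<and> prime y \<and> prime z \<and>
                 a\<^sup>2 * x\<^sup>2 + b\<^sup>2 * y\<^sup>2 - c\<^sup>2 * r\<^sup>2 * z\<^sup>2 = 0)))"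
proof -
  define K where "K = 4 * a^2 * b^2 + 2 * c^2"
  have no_solution: "a^2 * x^2 + b^2 * y^2 - c^2 * r^2 * z^2 \<noteq> 0"
    if "r > 1" "\<not> prime r" "real_of_int r > real_of_int K"
      "x \<in> primes_or_one" "y \<in> primes_or_one" for r x y z
    using no_scaled_solution_beyond_bound[OF assms(1-4) that(1,2) _ that(4,5)] that(3)
    unfolding K_def of_int_less_iff .
  have Zp_solvable: "Zp_unit_solvable p (\<lambda>x y z. a^2 * x^2 + b^2 * y^2 - c^2 * r^2 * z^2)"
    if "prime p" "\<forall>q. prime q \<and> q dvd r \<longrightarrow> [q = 1] (mod 4)" "gcd r a = 1" "gcd r b = 1" for p r
    using Zp_unit_solvable_scaled_pythagorean[OF assms(4)] that by (simp add: coprime_iff_gcd_eq_1)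
  have "x \<in> primes_or_one" if "prime x" for x
    using that by (simp add: primes_or_one_def)
  then show ?thesis
    using scaled_pythagorean_real_solution[OF assms(4) order.strict_trans[OF zero_less_one]]
      composite_scaled_solution_le_div[OF assms(1-4), folded K_def] no_solution Zp_solvable
    by (intro conjI exI[of _ "real_of_int K"]) (simp; blast)+
qed

end
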